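(* Let $X$ be a real Hausdorff locally convex topological vector space and let $f,g:X\to\overline{\mathbb R}$ be proper, convex and lower semicontinuous. Let $U\subseteq\operatorname{dom} f\cap\operatorname{dom} g$ be segment-dense in $\operatorname{dom} f\cap\operatorname{dom} g$ and suppose $f(u)=g(u)$ for all $u\in U$. Then $f=g$ on $\operatorname{dom} f\cap\operatorname{dom} g$.
   Context: $\overline{\mathbb R}=\mathbb R\cup\{\pm\infty\}$; $\operatorname{dom} f=\{x:f(x)<+\infty\}$; proper: $\operatorname{dom} f\ne\emptyset$ and $f>-\infty$. $[x,y]=\{x+t(y-x):t\in[0,1]\}$. Definition (segment-dense): for a convex set $V$ and $U\subseteq V$, $U$ is segment-dense in $V$ if for each $x\in V$ there exists $y\in U$ such that $x$ is a cluster point of $[x,y]\cap U$. *)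

theory Defs
  imports "HOL-Analysis.Analysis"
begin

definition locally_convex_tvs :: "'a::{real_vector, t2_space} itself \<Rightarrow> bool" where
  "locally_convex_tvs _ \<longleftrightarrow>
     continuous_on UNIV (\<lambda>(x::'a, y::'a). x + y) \<and>
     continuous_on UNIV (\<lambda>(c::real, x::'a). c *\<^sub>R x) \<and>
     (\<forall>W::'a set. open W \<and> 0 \<in> W \<longrightarrow> (\<exists>V. open V \<and> convex V \<and> 0 \<in> V \<and> V \<subseteq> W))"

definition edom :: "('a \<Rightarrow> ereal) \<Rightarrow> 'a set" where
  "edom f = {x. f x < \<infinity>}"

definition proper_fun :: "('a \<Rightarrow> ereal) \<Rightarrow> bool" where
  "proper_fun f \<longleftrightarrow> edom f \<noteq> {} \<and> (\<forall>x. f x > -\<infinity>)"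

definition convex_efun :: "('a::real_vector \<Rightarrow> ereal) \<Rightarrow> bool" where
  "convex_efun f \<longleftrightarrow> convex {(x, t::real). f x \<le> ereal t}"

definition lsc_efun :: "('a::topological_space \<Rightarrow> ereal) \<Rightarrow> bool" where
  "lsc_efun f \<longleftrightarrow> (\<forall>c::ereal. closed {x. f x \<le> c})"

definition segment_dense :: "'a::{real_vector, topological_space} set \<Rightarrow> 'a set \<Rightarrow> bool" where
  "segment_dense U V \<longleftrightarrow> (\<forall>x\<in>V. \<exists>y\<in>U. x islimpt (closed_segment x y \<inter> U))"

end

theory Submission
  imports Defs
begin

text \<open>Fix \<open>x\<close> in both domains and pick \<open>y \<in> U\<close> such that \<open>x\<close> clusters at \<open>[x,y] \<inter> U\<close>.
  Convexity of \<open>g\<close> bounds \<open>g\<close> on an initial piece \<open>[x, x + \<delta>(y - x))\<close> of the segment by any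
  level \<open>c > g x\<close>; since the rest of the segment is compact and misses \<open>x\<close>, \<open>x\<close> still clusters
  at the points of \<open>U\<close> in that piece, where \<open>f = g \<le> c\<close>. Lower semicontinuity of \<open>f\<close> then gives
  \<open>f x \<le> c\<close>, hence \<open>f x \<le> g x\<close>; the reverse inequality is symmetric.\<close>

lemma locally_convex_tvs_continuous_on_line:
  fixes x y :: "'a::{real_vector, t2_space}"
  assumes "locally_convex_tvs TYPE('a)"
  shows "continuous_on UNIV (\<lambda>u::real. (1 - u) *\<^sub>R x + u *\<^sub>R y)"
proof -
  have add: "continuous_on UNIV (\<lambda>(x::'a, y::'a). x + y)"
    and scale: "continuous_on UNIV (\<lambda>(c::real, x::'a). c *\<^sub>R x)"
    using assms unfolding locally_convex_tvs_def by auto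
  have "continuous_on UNIV (\<lambda>u::real. c u *\<^sub>R v)"
    if "continuous_on UNIV c" for c :: "real \<Rightarrow> real" and v :: 'a
    using continuous_on_compose[OF continuous_on_Pair[OF that continuous_on_const]
        continuous_on_subset[OF scale]]
    by (simp add: o_def)
  then have "continuous_on UNIV (\<lambda>u::real. ((1 - u) *\<^sub>R x, u *\<^sub>R y))"
    by (intro continuous_on_Pair) (blast intro: continuous_intros)+
  from continuous_on_compose[OF this continuous_on_subset[OF add]] show ?thesis
    by (simp add: o_def)
qed

lemma islimpt_initial_subsegment:
  fixes x y :: "'a::{real_vector, t2_space}"
  assumes "locally_convex_tvs TYPE('a)"
    and limpt: "x islimpt (closed_segment x y \<inter> S)" and "\<delta> > 0"
  shows "x islimpt ((\<lambda>u. (1 - u) *\<^sub>R x + u *\<^sub>R y) ` {0..<\<delta>} \<inter> S)"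
proof -
  define K where "K = (\<lambda>u. (1 - u) *\<^sub>R x + u *\<^sub>R y) ` {\<delta>..1}"
  have "y \<noteq> x"
    using limpt islimpt_finite[of "closed_segment x x \<inter> S" x] by auto
  have "compact K"
    unfolding K_def
    by (intro compact_continuous_image continuous_on_subset[OF
          locally_convex_tvs_continuous_on_line[OF assms(1)]]) auto
  moreover have "x \<notin> K"
  proof
    assume "x \<in> K"
    then obtain u where "\<delta> \<le> u" "(1 - u) *\<^sub>R x + u *\<^sub>R y = x"
      unfolding K_def by auto
    then have "u *\<^sub>R (y - x) = 0" by (simp add: algebra_simps)
    with \<open>\<delta> \<le> u\<close> \<open>\<delta> > 0\<close> \<open>y \<noteq> x\<close> show False by auto
  qed
  ultimately have "\<not> x islimpt K"
    using closed_limpt compact_imp_closed by blast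
  moreover have "closed_segment x y \<inter> S
      \<subseteq> ((\<lambda>u. (1 - u) *\<^sub>R x + u *\<^sub>R y) ` {0..<\<delta>} \<inter> S) \<union> K"
    unfolding closed_segment_def K_def by force
  ultimately show ?thesis
    using islimpt_subset[OF limpt] islimpt_Un by blast
qed

lemma convex_efun_le_combination:
  assumes "convex_efun g" and "g x \<le> ereal a" and "g y \<le> ereal b"
    and "0 \<le> u" and "u \<le> 1"
  shows "g ((1 - u) *\<^sub>R x + u *\<^sub>R y) \<le> ereal ((1 - u) * a + u * b)"
proof -
  let ?epi = "{(x, t::real). g x \<le> ereal t}"
  have "(1 - u) *\<^sub>R (x, a) + u *\<^sub>R (y, b) \<in> ?epi"
    using assms unfolding convex_efun_def
    by (intro convexD) auto
  then show ?thesis by (simp add: scaleR_prod_def)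
qed

lemma lsc_efun_le_at_limpt:
  assumes "lsc_efun f" and "x islimpt S" and "\<forall>z\<in>S. f z \<le> c"
  shows "f x \<le> c"
proof -
  have "closed {z. f z \<le> c}" using assms(1) unfolding lsc_efun_def by blast
  moreover have "x islimpt {z. f z \<le> c}"
    using assms(2,3) by (auto intro: islimpt_subset)
  ultimately show ?thesis using closed_limpt by blast
qed

lemma lsc_le_convex_at_segment_limpt:
  fixes f g :: "'a::{real_vector, t2_space} \<Rightarrow> ereal"
  assumes lctvs: "locally_convex_tvs TYPE('a)"
    and "lsc_efun f" and "convex_efun g" and "g y < \<infinity>"
    and limpt: "x islimpt (closed_segment x y \<inter> S)"
    and le: "\<forall>z\<in>S. f z \<le> g z"
  shows "f x \<le> g x"
proof (rule dense_ge)
  fix c assume "g x < c"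
  show "f x \<le> c"
  proof (cases c)
    case (real r)
    obtain a where a: "g x < ereal a" "a < r"
      using ereal_dense2[OF \<open>g x < c\<close>] real by auto
    obtain b where b: "g y < ereal b"
      using ereal_dense2[OF \<open>g y < \<infinity>\<close>] by auto
    define \<delta> where "\<delta> = min 1 ((r - a) / (\<bar>b - a\<bar> + 1))"
    have "\<delta> > 0" using \<open>a < r\<close> by (simp add: \<delta>_def)
    have "g z \<le> c" if z: "z \<in> (\<lambda>u. (1 - u) *\<^sub>R x + u *\<^sub>R y) ` {0..<\<delta>}" for z
    proof -
      obtain u where u: "0 \<le> u" "u < \<delta>" "z = (1 - u) *\<^sub>R x + u *\<^sub>R y"
        using z by auto
      have "u * (b - a) \<le> u * (\<bar>b - a\<bar> + 1)"
        using u by (intro mult_left_mono) auto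
      also have "\<dots> \<le> \<delta> * (\<bar>b - a\<bar> + 1)"
        using u by (intro mult_right_mono) auto
      also have "\<dots> \<le> r - a"
        by (simp add: \<delta>_def min_mult_distrib_right)
      finally have "(1 - u) * a + u * b \<le> r" by (simp add: algebra_simps)
      moreover have "g z \<le> ereal ((1 - u) * a + u * b)"
        using convex_efun_le_combination[OF \<open>convex_efun g\<close>] a b u \<delta>_def by simp
      ultimately show ?thesis using real order_trans by fastforce
    qed
    with islimpt_initial_subsegment[OF lctvs limpt \<open>\<delta> > 0\<close>] le
    show ?thesis
      by (intro lsc_efun_le_at_limpt[OF \<open>lsc_efun f\<close>]) (auto intro: order_trans)
  qed (use \<open>g x < c\<close> in auto)
qed

theorem mainTheorem6:
  fixes f g :: "'a::{real_vector, t2_space} \<Rightarrow> ereal" and U :: "'a set"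
  assumes "locally_convex_tvs TYPE('a)"
    and "proper_fun f" and "convex_efun f" and "lsc_efun f"
    and "proper_fun g" and "convex_efun g" and "lsc_efun g"
    and "U \<subseteq> edom f \<inter> edom g"
    and "segment_dense U (edom f \<inter> edom g)"
    and "\<forall>u\<in>U. f u = g u"
  shows "\<forall>x\<in>edom f \<inter> edom g. f x = g x"
proof
  fix x assume "x \<in> edom f \<inter> edom g"
  then obtain y where "y \<in> U" and limpt: "x islimpt (closed_segment x y \<inter> U)"
    using assms(9) unfolding segment_dense_def by blast
  then have "f y < \<infinity>" "g y < \<infinity>"
    using assms(8) unfolding edom_def by auto
  have "f x \<le> g x"
    using lsc_le_convex_at_segment_limpt[OF assms(1,4,6) \<open>g y < \<infinity>\<close> limpt] assms(10)
    by simp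
  moreover have "g x \<le> f x"
    using lsc_le_convex_at_segment_limpt[OF assms(1,7,3) \<open>f y < \<infinity>\<close> limpt] assms(10)
    by simp
  ultimately show "f x = g x" by simp
qed

end
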